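(* Let $L$ be a doubly even code of length $n$ and let $\phi\colon E_n\to SO_n$ be the homomorphism $\phi(i_1,\dots,i_n)=\operatorname{diag}\bigl((-1)^{i_1},\dots,(-1)^{i_n}\bigr)$. Then $\phi(L)$ has a finite centralizer in $SO_n$ if and only if a generator matrix of $L$ has distinct columns.
   Context: $k$ is an algebraically closed field of characteristic $0$ and $SO_n=SO_n(k)$. $E_n\subset(\mathbb{Z}/2\mathbb{Z})^n$ is the subgroup of vectors of even weight, where the weight of a vector is its number of coordinates equal to $1$. A doubly even code of length $n$ is a $\mathbb{Z}/2\mathbb{Z}$-subspace $L\subset(\mathbb{Z}/2\mathbb{Z})^n$ in which every element has weight divisible by $4$. A generator matrix of $L$ is a matrix over $\mathbb{Z}/2\mathbb{Z}$ with $n$ columns whose rows span $L$. *)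

theory Defs
  imports "HOL-Computational_Algebra.Polynomial" "Jordan_Normal_Form.Determinant"
begin

text \<open>A vector of (Z/2Z)^n is represented by its support, a subset of {0..<n};
  addition is symmetric difference and the weight is the cardinality.\<close>

definition F2vecs :: "nat \<Rightarrow> nat set set" where
  "F2vecs n = Pow {..<n}"

definition weight :: "nat set \<Rightarrow> nat" where
  "weight v = card v"

definition E :: "nat \<Rightarrow> nat set set" where
  "E n = {v \<in> F2vecs n. even (weight v)}"

definition F2_subspace :: "nat \<Rightarrow> nat set set \<Rightarrow> bool" where
  "F2_subspace n L \<longleftrightarrow> L \<subseteq> F2vecs n \<and> {} \<in> L \<and>
     (\<forall>a\<in>L. \<forall>b\<in>L. (a - b) \<union> (b - a) \<in> L)"

definition doubly_even_code :: "nat \<Rightarrow> nat set set \<Rightarrow> bool" where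
  "doubly_even_code n L \<longleftrightarrow> F2_subspace n L \<and> (\<forall>v\<in>L. 4 dvd weight v)"

text \<open>A matrix over Z/2Z with n columns, given as the list of its rows (supports).
  Its row space: all Z/2Z-linear combinations (sums of subsets of rows).\<close>

definition row_space :: "nat set list \<Rightarrow> nat set set" where
  "row_space G = {{j. odd (card {i\<in>I. j \<in> G ! i})} | I. I \<subseteq> {..<length G}}"

definition generator_matrix :: "nat \<Rightarrow> nat set set \<Rightarrow> nat set list \<Rightarrow> bool" where
  "generator_matrix n L G \<longleftrightarrow> set G \<subseteq> F2vecs n \<and> row_space G = L"

definition column :: "nat set list \<Rightarrow> nat \<Rightarrow> bool list" where
  "column G j = map (\<lambda>r. j \<in> r) G"

definition distinct_columns :: "nat \<Rightarrow> nat set list \<Rightarrow> bool" where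
  "distinct_columns n G \<longleftrightarrow> inj_on (column G) {..<n}"

definition SO :: "nat \<Rightarrow> 'k::field mat set" where
  "SO n = {A \<in> carrier_mat n n. transpose_mat A * A = 1\<^sub>m n \<and> det A = 1}"

definition phi :: "nat \<Rightarrow> nat set \<Rightarrow> 'k::field mat" where
  "phi n v = mat n n (\<lambda>(i,j). if i = j then (if i \<in> v then - 1 else 1) else 0)"

definition centralizer_in :: "'k::field mat set \<Rightarrow> 'k mat set \<Rightarrow> 'k mat set" where
  "centralizer_in G S = {A \<in> G. \<forall>B\<in>S. A * B = B * A}"

end

theory Submission
  imports Defs
begin

(*
  A matrix commutes with phi v = diag((-1)^v_1, ..., (-1)^v_n) iff each of its nonzero entries
  (r, s) has r and s on the same side of v. Since the rows of G span L, G has distinct columns iff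
  L separates every pair of coordinates. In that case a matrix centralizing phi(L) is diagonal,
  and an orthogonal diagonal matrix has entries +-1, so the centralizer is finite. If instead
  coordinates i and j are not separated, every rotation in the (i,j)-plane centralizes phi(L);
  the square of a rotation has determinant 1 and the circle c^2 + s^2 = 1 has infinitely many
  points in characteristic 0, so the centralizer is infinite.
*)

lemma index_mult_mat_sum:
  assumes "A \<in> carrier_mat n n" "B \<in> carrier_mat n n" "r < n" "t < n"
  shows "(A * B) $$ (r,t) = (\<Sum>k<n. A $$ (r,k) * B $$ (k,t))"
  using assms by (simp add: scalar_prod_def lessThan_atLeast0)

lemma index_mult_mat_row_supported:
  assumes "A \<in> carrier_mat n n" "B \<in> carrier_mat n n" "r < n" "t < n" "K \<subseteq> {..<n}"
    and "\<And>k. k < n \<Longrightarrow> k \<notin> K \<Longrightarrow> A $$ (r,k) = 0"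
  shows "(A * B) $$ (r,t) = (\<Sum>k\<in>K. A $$ (r,k) * B $$ (k,t))"
proof -
  have "(A * B) $$ (r,t) = (\<Sum>k<n. A $$ (r,k) * B $$ (k,t))"
    using assms(1-4) by (rule index_mult_mat_sum)
  also have "\<dots> = (\<Sum>k\<in>K. A $$ (r,k) * B $$ (k,t))"
    using assms(5,6) by (intro sum.mono_neutral_right) auto
  finally show ?thesis .
qed

lemma finite_carrier_mat_elements_subset:
  assumes "finite F"
  shows "finite {A \<in> carrier_mat n m. elements_mat A \<subseteq> F}"
proof -
  let ?I = "{..<n} \<times> {..<m}"
  have "{A \<in> carrier_mat n m. elements_mat A \<subseteq> F} \<subseteq> (\<lambda>f. mat n m f) ` (?I \<rightarrow>\<^sub>E F)"
  proof
    fix A assume A: "A \<in> {A \<in> carrier_mat n m. elements_mat A \<subseteq> F}"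
    then have "A = mat n m (restrict (($$) A) ?I)"
      by (intro eq_matI) auto
    moreover have "restrict (($$) A) ?I \<in> ?I \<rightarrow>\<^sub>E F"
      using A by auto
    ultimately show "A \<in> (\<lambda>f. mat n m f) ` (?I \<rightarrow>\<^sub>E F)"
      by blast
  qed
  moreover have "finite ((\<lambda>f. mat n m f) ` (?I \<rightarrow>\<^sub>E F))"
    using assms by (intro finite_imageI finite_PiE) auto
  ultimately show ?thesis
    by (rule finite_subset)
qed

lemma diagonal_orthogonal_mat_entry:
  assumes "A \<in> carrier_mat n n" "transpose_mat A * A = 1\<^sub>m n" "diagonal_mat A" "r < n"
  shows "A $$ (r,r) = 1 \<or> A $$ (r,r) = (- 1 :: 'a::idom)"
proof -
  have "1 = (transpose_mat A * A) $$ (r,r)"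
    using assms by simp
  also have "\<dots> = (\<Sum>k\<in>{r}. transpose_mat A $$ (r,k) * A $$ (k,r))"
    using assms by (intro index_mult_mat_row_supported) (auto simp: diagonal_mat_def)
  also have "\<dots> = A $$ (r,r) ^ 2"
    using assms by (simp add: power2_eq_square)
  finally show ?thesis
    by (metis power2_eq_1_iff)
qed

lemma orthogonal_square_in_SO:
  assumes "A \<in> carrier_mat n n" "transpose_mat A * A = 1\<^sub>m n"
  shows "A * A \<in> SO n"
proof -
  have "transpose_mat (A * A) * (A * A) = transpose_mat A * (transpose_mat A * A) * A"
    using assms(1) by (simp add: transpose_mult assoc_mult_mat[of _ n n _ n _ n])
  also have "\<dots> = 1\<^sub>m n"
    using assms by simp
  finally have "transpose_mat (A * A) * (A * A) = 1\<^sub>m n" .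
  moreover have "det (A * A) = det (transpose_mat A * A)"
    using assms(1) by (simp add: det_mult[of _ n] det_transpose)
  ultimately show ?thesis
    using assms by (simp add: SO_def)
qed

lemma phi_carrier [simp]: "phi n v \<in> carrier_mat n n"
  by (simp add: phi_def)

lemma dim_phi [simp]: "dim_row (phi n v) = n" "dim_col (phi n v) = n"
  by (simp_all add: phi_def)

lemma index_phi [simp]:
  "r < n \<Longrightarrow> s < n \<Longrightarrow> phi n v $$ (r,s) = (if r = s then if r \<in> v then - 1 else 1 else 0)"
  by (simp add: phi_def)

lemma index_mult_phi_right:
  assumes "A \<in> carrier_mat n n" "r < n" "s < n"
  shows "(A * phi n v) $$ (r,s) = A $$ (r,s) * phi n v $$ (s,s)"
proof -
  have "(A * phi n v) $$ (r,s) = (\<Sum>k<n. A $$ (r,k) * phi n v $$ (k,s))"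
    using assms by (intro index_mult_mat_sum) auto
  also have "\<dots> = (\<Sum>k<n. if k = s then A $$ (r,s) * phi n v $$ (s,s) else 0)"
    using assms by (intro sum.cong) auto
  finally show ?thesis
    using assms by simp
qed

lemma index_mult_phi_left:
  assumes "A \<in> carrier_mat n n" "r < n" "s < n"
  shows "(phi n v * A) $$ (r,s) = phi n v $$ (r,r) * A $$ (r,s)"
proof -
  have "(phi n v * A) $$ (r,s) = (\<Sum>k<n. phi n v $$ (r,k) * A $$ (k,s))"
    using assms by (intro index_mult_mat_sum) auto
  also have "\<dots> = (\<Sum>k<n. if k = r then phi n v $$ (r,r) * A $$ (r,s) else 0)"
    using assms by (intro sum.cong) auto
  finally show ?thesis
    using assms by simp
qed

lemma commute_phi_iff:
  assumes "A \<in> carrier_mat n n"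
  shows "A * phi n v = phi n v * (A :: 'k::field_char_0 mat) \<longleftrightarrow>
    (\<forall>r<n. \<forall>s<n. A $$ (r,s) \<noteq> 0 \<longrightarrow> (r \<in> v \<longleftrightarrow> s \<in> v))"
proof -
  have entry: "(A * phi n v) $$ (r,s) = (phi n v * A) $$ (r,s) \<longleftrightarrow>
      (A $$ (r,s) \<noteq> 0 \<longrightarrow> (r \<in> v \<longleftrightarrow> s \<in> v))" if "r < n" "s < n" for r s
    unfolding index_mult_phi_left[OF assms that] index_mult_phi_right[OF assms that]
    using that by auto
  show ?thesis
  proof
    assume "A * phi n v = phi n v * A"
    then show "\<forall>r<n. \<forall>s<n. A $$ (r,s) \<noteq> 0 \<longrightarrow> (r \<in> v \<longleftrightarrow> s \<in> v)"
      using entry by metis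
  next
    assume "\<forall>r<n. \<forall>s<n. A $$ (r,s) \<noteq> 0 \<longrightarrow> (r \<in> v \<longleftrightarrow> s \<in> v)"
    then show "A * phi n v = phi n v * A"
      using assms entry by (intro eq_matI) (auto simp del: index_mult_mat(1))
  qed
qed

definition separates_coordinates :: "nat \<Rightarrow> nat set set \<Rightarrow> bool" where
  "separates_coordinates n V \<longleftrightarrow> (\<forall>i<n. \<forall>j<n. i \<noteq> j \<longrightarrow> (\<exists>v\<in>V. (i \<in> v) \<noteq> (j \<in> v)))"

lemma centralizer_phi_diagonal:
  assumes "separates_coordinates n V" "A \<in> centralizer_in (SO n :: 'k::field_char_0 mat set) (phi n ` V)"
  shows "diagonal_mat A"
  unfolding diagonal_mat_def
proof (intro allI impI)
  fix r s assume "r < dim_row A" "s < dim_col A" "r \<noteq> s"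
  moreover have A: "A \<in> carrier_mat n n" "\<forall>v\<in>V. A * phi n v = phi n v * A"
    using assms(2) by (auto simp: centralizer_in_def SO_def)
  ultimately have rs: "r < n" "s < n" "r \<noteq> s"
    by auto
  then obtain v where "v \<in> V" "(r \<in> v) \<noteq> (s \<in> v)"
    using assms(1) unfolding separates_coordinates_def by blast
  then show "A $$ (r,s) = 0"
    using A rs commute_phi_iff[OF A(1), of v] by auto
qed

lemma finite_centralizer_phi:
  assumes "separates_coordinates n V"
  shows "finite (centralizer_in (SO n :: 'k::field_char_0 mat set) (phi n ` V))"
proof -
  have "centralizer_in (SO n) (phi n ` V) \<subseteq> {A \<in> carrier_mat n n. elements_mat A \<subseteq> {0, 1, - 1 :: 'k}}"
  proof
    fix A :: "'k mat" assume C: "A \<in> centralizer_in (SO n) (phi n ` V)"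
    then have A: "A \<in> carrier_mat n n" "transpose_mat A * A = 1\<^sub>m n"
      by (auto simp: centralizer_in_def SO_def)
    have "diagonal_mat A"
      using centralizer_phi_diagonal[OF assms C] .
    then have "A $$ (r,s) \<in> {0, 1, - 1}" if "r < n" "s < n" for r s
      using diagonal_orthogonal_mat_entry[OF A \<open>diagonal_mat A\<close>, of r] A(1) that
      by (cases "r = s") (auto simp: diagonal_mat_def)
    moreover have "\<exists>r<n. \<exists>s<n. x = A $$ (r,s)" if "x \<in> elements_mat A" for x
      using that A(1) by (auto dest!: elements_matD)
    ultimately show "A \<in> {A \<in> carrier_mat n n. elements_mat A \<subseteq> {0, 1, - 1}}"
      using A(1) by blast
  qed
  then show ?thesis
    by (rule finite_subset) (simp add: finite_carrier_mat_elements_subset)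
qed

definition plane_rotation :: "nat \<Rightarrow> nat \<Rightarrow> nat \<Rightarrow> 'a::comm_ring_1 \<Rightarrow> 'a \<Rightarrow> 'a mat" where
  "plane_rotation n i j c s = mat n n (\<lambda>(r,t).
     if r = t then (if r = i \<or> r = j then c else 1)
     else if r = i \<and> t = j then s else if r = j \<and> t = i then - s else 0)"

lemma plane_rotation_carrier [simp]: "plane_rotation n i j c s \<in> carrier_mat n n"
  by (simp add: plane_rotation_def)

lemma index_plane_rotation [simp]:
  "r < n \<Longrightarrow> t < n \<Longrightarrow> plane_rotation n i j c s $$ (r,t) =
     (if r = t then (if r = i \<or> r = j then c else 1)
      else if r = i \<and> t = j then s else if r = j \<and> t = i then - s else 0)"
  by (simp add: plane_rotation_def)

lemma dim_plane_rotation [simp]: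
  "dim_row (plane_rotation n i j c s) = n" "dim_col (plane_rotation n i j c s) = n"
  by (simp_all add: plane_rotation_def)

lemma index_plane_rotation_eq_0:
  assumes "r < n" "t < n" "r \<noteq> t" "\<not> (r = i \<and> t = j)" "\<not> (r = j \<and> t = i)"
  shows "plane_rotation n i j c s $$ (r,t) = 0"
  using assms by auto

lemma plane_rotation_mult:
  assumes "i < n" "j < n" "i \<noteq> j"
  shows "plane_rotation n i j c s * plane_rotation n i j c' s' =
    plane_rotation n i j (c * c' - s * s') (c * s' + s * c')"
proof (rule eq_matI)
  fix r t assume "r < dim_row (plane_rotation n i j (c * c' - s * s') (c * s' + s * c'))"
    "t < dim_col (plane_rotation n i j (c * c' - s * s') (c * s' + s * c'))"
  then have rt: "r < n" "t < n" by simp_all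
  let ?K = "if r \<in> {i,j} then {i,j} else {r}"
  have "(plane_rotation n i j c s * plane_rotation n i j c' s') $$ (r,t) =
    (\<Sum>k\<in>?K. plane_rotation n i j c s $$ (r,k) * plane_rotation n i j c' s' $$ (k,t))"
    using assms rt by (intro index_mult_mat_row_supported) auto
  also have "\<dots> = plane_rotation n i j (c * c' - s * s') (c * s' + s * c') $$ (r,t)"
    using assms rt by (auto simp: algebra_simps)
  finally show "(plane_rotation n i j c s * plane_rotation n i j c' s') $$ (r,t) =
    plane_rotation n i j (c * c' - s * s') (c * s' + s * c') $$ (r,t)" .
qed simp_all

lemma transpose_plane_rotation:
  "transpose_mat (plane_rotation n i j c s) = plane_rotation n i j c (- s)"
  by (rule eq_matI) auto

lemma plane_rotation_1_0: "plane_rotation n i j 1 0 = 1\<^sub>m n"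
  by (rule eq_matI) auto

lemma plane_rotation_orthogonal:
  assumes "i < n" "j < n" "i \<noteq> j" "c^2 + s^2 = 1"
  shows "transpose_mat (plane_rotation n i j c s) * plane_rotation n i j c s = 1\<^sub>m n"
  using assms by (simp add: transpose_plane_rotation plane_rotation_mult power2_eq_square
      flip: plane_rotation_1_0[of n i j])

lemma plane_rotation_commute_phi:
  assumes "i \<in> v \<longleftrightarrow> j \<in> v"
  shows "plane_rotation n i j c s * phi n v = phi n v * (plane_rotation n i j c s :: 'k::field_char_0 mat)"
  unfolding commute_phi_iff[OF plane_rotation_carrier]
proof (intro allI impI)
  fix r t assume "r < n" "t < n" "plane_rotation n i j c s $$ (r,t) \<noteq> 0"
  then consider "r = t" | "r = i" "t = j" | "r = j" "t = i"
    by (metis index_plane_rotation_eq_0)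
  then show "r \<in> v \<longleftrightarrow> t \<in> v"
    using assms by cases simp_all
qed

lemma plane_rotation_square_in_centralizer:
  assumes "i < n" "j < n" "i \<noteq> j" "\<forall>v\<in>V. i \<in> v \<longleftrightarrow> j \<in> v" "c^2 + s^2 = 1"
  shows "plane_rotation n i j c s * plane_rotation n i j c s
    \<in> centralizer_in (SO n :: 'k::field_char_0 mat set) (phi n ` V)"
proof -
  let ?R = "plane_rotation n i j"
  have "?R c s * ?R c s \<in> SO n"
    using assms by (intro orthogonal_square_in_SO plane_rotation_orthogonal) simp_all
  moreover have "?R c s * ?R c s = ?R (c * c - s * s) (c * s + s * c)"
    by (rule plane_rotation_mult[OF assms(1-3)])
  moreover have "?R (c * c - s * s) (c * s + s * c) * phi n v = phi n v * ?R (c * c - s * s) (c * s + s * c)"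
    if "v \<in> V" for v
    using assms(4) that by (intro plane_rotation_commute_phi) blast
  ultimately show ?thesis
    unfolding centralizer_in_def by auto
qed

lemma index_plane_rotation_square:
  assumes "i < n" "j < n" "i \<noteq> j" "c^2 + s^2 = (1 :: 'a::comm_ring_1)"
  shows "(plane_rotation n i j c s * plane_rotation n i j c s) $$ (i,i) = 1 - 2 * s^2"
proof -
  have "(plane_rotation n i j c s * plane_rotation n i j c s) $$ (i,i) = c^2 - s^2"
    using assms by (simp add: plane_rotation_mult power2_eq_square)
  also have "\<dots> = 1 - 2 * s^2"
    by (simp add: algebra_simps flip: assms(4))
  finally show ?thesis .
qed

lemma cayley_denominator_nonzero: "(1 + of_nat t ^ 2 :: 'a::field_char_0) \<noteq> 0"
  by (metis of_nat_1 of_nat_add of_nat_eq_0_iff of_nat_power add_is_0 one_neq_zero)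

lemma cross_mult_1_plus_square_imp_eq:
  fixes t u :: nat
  assumes "t * (1 + u^2) = u * (1 + t^2)"
  shows "t = u"
proof -
  have "(int t - int u) * (1 - int t * int u) = 0"
    using arg_cong[OF assms, of int] by (simp add: algebra_simps power2_eq_square)
  then consider "t = u" | "int t * int u = 1" by fastforce
  then show ?thesis by cases (auto simp: zmult_eq_1_iff)
qed

lemma infinite_unit_circle_sine_squares:
  "infinite {s^2 |c s :: 'a::field_char_0. c^2 + s^2 = 1}"
proof -
  \<comment> \<open>Cayley parametrisation t \<mapsto> ((1 - t^2) / (1 + t^2), 2 t / (1 + t^2)) of the circle\<close>
  define d where "d t = (1 + of_nat t ^ 2 :: 'a)" for t
  define sine where "sine t = 2 * of_nat t / d t" for t
  have d: "d t \<noteq> 0" for t unfolding d_def by (rule cayley_denominator_nonzero)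
  have "((1 - of_nat t ^ 2) / d t)^2 + sine t ^ 2 = 1" for t
    using d[of t] by (simp add: sine_def d_def field_simps) (simp add: algebra_simps power2_eq_square)
  then have "range (\<lambda>t. sine t ^ 2) \<subseteq> {s^2 |c s :: 'a. c^2 + s^2 = 1}" by blast
  moreover have "inj (\<lambda>t. sine t ^ 2)"
  proof (rule injI)
    fix t u assume "sine t ^ 2 = sine u ^ 2"
    then have "of_nat t ^ 2 * (1 + of_nat u ^ 2) ^ 2 = (of_nat u ^ 2 * (1 + of_nat t ^ 2) ^ 2 :: 'a)"
      using d[of t] d[of u] by (simp add: sine_def d_def field_simps)
    then have "of_nat ((t * (1 + u^2))^2) = (of_nat ((u * (1 + t^2))^2) :: 'a)"
      by (simp only: of_nat_mult of_nat_power of_nat_add of_nat_1 power_mult_distrib)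
    then have "t * (1 + u^2) = u * (1 + t^2)"
      by (simp only: of_nat_eq_iff power2_eq_iff_nonneg)
    then show "t = u" by (rule cross_mult_1_plus_square_imp_eq)
  qed
  ultimately show ?thesis
    using infinite_UNIV_nat finite_imageD finite_subset by blast
qed

lemma infinite_centralizer_phi:
  assumes "i < n" "j < n" "i \<noteq> j" "\<forall>v\<in>V. i \<in> v \<longleftrightarrow> j \<in> v"
  shows "infinite (centralizer_in (SO n :: 'k::field_char_0 mat set) (phi n ` V))"
proof
  let ?C = "centralizer_in (SO n :: 'k mat set) (phi n ` V)"
  assume "finite ?C"
  moreover have "{s^2 |c s :: 'k. c^2 + s^2 = 1} \<subseteq> (\<lambda>A. (1 - A $$ (i,i)) / 2) ` ?C"
  proof
    fix x assume "x \<in> {s^2 |c s :: 'k. c^2 + s^2 = 1}"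
    then obtain c s where cs: "x = s^2" "c^2 + s^2 = 1"
      by blast
    let ?A = "plane_rotation n i j c s * plane_rotation n i j c s"
    have "x = (1 - ?A $$ (i,i)) / 2"
      unfolding index_plane_rotation_square[OF assms(1-3) cs(2)] cs(1) by simp
    moreover have "?A \<in> ?C"
      using assms cs(2) by (rule plane_rotation_square_in_centralizer)
    ultimately show "x \<in> (\<lambda>A. (1 - A $$ (i,i)) / 2) ` ?C"
      by (rule image_eqI)
  qed
  ultimately show False
    using infinite_unit_circle_sine_squares finite_subset by blast
qed

lemma finite_centralizer_phi_iff:
  "finite (centralizer_in (SO n :: 'k::field_char_0 mat set) (phi n ` V)) \<longleftrightarrow>
    separates_coordinates n V"
proof
  assume fin: "finite (centralizer_in (SO n :: 'k mat set) (phi n ` V))"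
  show "separates_coordinates n V"
    unfolding separates_coordinates_def
  proof (intro allI impI)
    fix i j assume ij: "i < n" "j < n" "i \<noteq> j"
    show "\<exists>v\<in>V. (i \<in> v) \<noteq> (j \<in> v)"
    proof (rule ccontr)
      assume "\<not> (\<exists>v\<in>V. (i \<in> v) \<noteq> (j \<in> v))"
      then have "\<forall>v\<in>V. i \<in> v \<longleftrightarrow> j \<in> v"
        by simp
      with ij fin show False
        using infinite_centralizer_phi by blast
    qed
  qed
qed (rule finite_centralizer_phi)

lemma set_subset_row_space: "set G \<subseteq> row_space G"
proof
  fix r assume "r \<in> set G"
  then obtain k where k: "k < length G" "r = G ! k"
    by (auto simp: in_set_conv_nth)
  have "{i \<in> {k}. x \<in> G ! i} = (if x \<in> G ! k then {k} else {})" for x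
    by auto
  then have "r = {x. odd (card {i \<in> {k}. x \<in> G ! i})}"
    using k by auto
  then show "r \<in> row_space G"
    using k unfolding row_space_def by blast
qed

lemma column_eq_iff_row_space:
  "column G i = column G j \<longleftrightarrow> (\<forall>v\<in>row_space G. i \<in> v \<longleftrightarrow> j \<in> v)"
proof
  assume "column G i = column G j"
  then have rows: "\<forall>r\<in>set G. i \<in> r \<longleftrightarrow> j \<in> r"
    by (simp only: column_def map_eq_conv)
  show "\<forall>v\<in>row_space G. i \<in> v \<longleftrightarrow> j \<in> v"
  proof
    fix v assume "v \<in> row_space G"
    then obtain I where I: "I \<subseteq> {..<length G}" "v = {x. odd (card {k \<in> I. x \<in> G ! k})}"
      unfolding row_space_def by blast
    have "{k \<in> I. i \<in> G ! k} = {k \<in> I. j \<in> G ! k}"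
      using rows I(1) by (auto dest: nth_mem)
    then show "i \<in> v \<longleftrightarrow> j \<in> v"
      using I(2) by simp
  qed
next
  assume "\<forall>v\<in>row_space G. i \<in> v \<longleftrightarrow> j \<in> v"
  then have "\<forall>r\<in>set G. i \<in> r \<longleftrightarrow> j \<in> r"
    using set_subset_row_space by blast
  then show "column G i = column G j"
    by (simp only: column_def map_eq_conv)
qed

lemma distinct_columns_iff_separates_coordinates:
  "distinct_columns n G \<longleftrightarrow> separates_coordinates n (row_space G)"
  unfolding distinct_columns_def separates_coordinates_def inj_on_def column_eq_iff_row_space
  by blast

theorem lemma8p15:
  fixes n :: nat and L :: "nat set set" and G :: "nat set list"
  assumes "doubly_even_code n L"
    and "generator_matrix n L G"
  shows "finite (centralizer_in (SO n :: 'k::{alg_closed_field, field_char_0} mat set)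
                   (phi n ` L))
         \<longleftrightarrow> distinct_columns n G"
proof -
  have "row_space G = L"
    using assms(2) by (simp add: generator_matrix_def)
  then show ?thesis
    by (simp add: finite_centralizer_phi_iff distinct_columns_iff_separates_coordinates)
qed

end
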